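(* Let $\mathcal{T}^X$ be a stable projective tree of spheres marked by a finite set $X$, let $v$ and $v'$ be two distinct internal vertices of $T^X$, and let $(x_n)_n$ be a sequence of spheres marked by $X$ converging to $\mathcal{T}^X$ via isomorphisms $(\phi_n)_n$. Then the sequence of isomorphisms $\phi_{n,v'}\circ\phi_{n,v}^{-1}:\mathbb{S}_v\to\mathbb{S}_{v'}$ converges locally uniformly on $\mathbb{S}_v\setminus\{i_v(v')\}$ to the constant map with value $i_{v'}(v)$.
   Context: A tree is a finite connected graph without cycles (vertices $V$, edges $2$-element subsets of $V$, $E_v$ the set of edges containing $v$); leaves are valence-$1$ vertices, others internal; stable means every internal vertex has valence $\ge3$. For a vertex $v$ and $e\in E_v$, $B_v(e)$ is the connected component of the tree minus $v$ containing $e$. A projective tree of spheres $\mathcal{T}^X$ marked by a finite set $X$ ($\ge3$ elements) consists of a tree $T^X$ whose set of leaves is $X$ and, for each internal vertex $v$, a sphere $\mathbb{S}_v$ with a projective (complex) structure (a class of homeomorphisms to $\hat{\mathbb{C}}$ modulo Möbius transformations) and an injection $i_v:E_v\to\mathbb{S}_v$; for a vertex $v'\ne v$, $i_v(v'):=i_v(e)$ where $v'\in B_v(e)$; $a_v:X\to\mathbb{S}_v$ is $a_v(x)=i_v(x)$. A sphere marked by $X$ is an injection $x:X\to\hat{\mathbb{C}}$. A sequence $x_n$ converges to $\mathcal{T}^X$ via $(\phi_n)$ if for every internal vertex $v$ there are projective isomorphisms $\phi_{n,v}:\hat{\mathbb{C}}\to\mathbb{S}_v$ with $\phi_{n,v}\circ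 x_n\to a_v$ pointwise on $X$. *)

theory Defs
  imports Complex_Main
begin

text \<open>The Riemann sphere is modelled as complex option, None being the point at infinity.\<close>
type_synonym ecomplex = "complex option"

fun cdist :: "ecomplex \<Rightarrow> ecomplex \<Rightarrow> real" where
  "cdist (Some z) (Some w) = 2 * cmod (z - w) / sqrt ((1 + (cmod z)\<^sup>2) * (1 + (cmod w)\<^sup>2))"
| "cdist (Some z) None = 2 / sqrt (1 + (cmod z)\<^sup>2)"
| "cdist None (Some w) = 2 / sqrt (1 + (cmod w)\<^sup>2)"
| "cdist None None = 0"

definition moeb :: "complex \<Rightarrow> complex \<Rightarrow> complex \<Rightarrow> complex \<Rightarrow> ecomplex \<Rightarrow> ecomplex" where
  "moeb a b c d p = (case p of
      None \<Rightarrow> (if c = 0 then None else Some (a / c))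
    | Some z \<Rightarrow> (if c * z + d = 0 then None else Some ((a * z + b) / (c * z + d))))"

definition is_moebius :: "(ecomplex \<Rightarrow> ecomplex) \<Rightarrow> bool" where
  "is_moebius f \<longleftrightarrow> (\<exists>a b c d. a * d - b * c \<noteq> 0 \<and> f = moeb a b c d)"

definition conv_sphere :: "(nat \<Rightarrow> ecomplex) \<Rightarrow> ecomplex \<Rightarrow> bool" where
  "conv_sphere s l \<longleftrightarrow> (\<forall>e>0. \<exists>N. \<forall>n\<ge>N. cdist (s n) l < e)"

definition loc_unif_conv_const ::
    "(nat \<Rightarrow> ecomplex \<Rightarrow> ecomplex) \<Rightarrow> ecomplex set \<Rightarrow> ecomplex \<Rightarrow> bool" where
  "loc_unif_conv_const F U c \<longleftrightarrow>
     (\<forall>z\<in>U. \<exists>r>0. \<forall>e>0. \<exists>N. \<forall>n\<ge>N. \<forall>w\<in>U. cdist w z < r \<longrightarrow> cdist (F n w) c < e)"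

definition edge_rel :: "'v set set \<Rightarrow> ('v \<times> 'v) set" where
  "edge_rel E = {(a, b). {a, b} \<in> E}"

definition has_cycle :: "'v set set \<Rightarrow> bool" where
  "has_cycle E \<longleftrightarrow> (\<exists>vs. length vs \<ge> 3 \<and> distinct vs \<and>
       (\<forall>k < length vs. {vs ! k, vs ! ((k + 1) mod length vs)} \<in> E))"

definition is_tree :: "'v set \<Rightarrow> 'v set set \<Rightarrow> bool" where
  "is_tree V E \<longleftrightarrow> finite V \<and> V \<noteq> {} \<and>
     (\<forall>e\<in>E. \<exists>a b. a \<noteq> b \<and> a \<in> V \<and> b \<in> V \<and> e = {a, b}) \<and>
     (\<forall>a\<in>V. \<forall>b\<in>V. (a, b) \<in> (edge_rel E)\<^sup>*) \<and>
     \<not> has_cycle E"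

definition edges_at :: "'v set set \<Rightarrow> 'v \<Rightarrow> 'v set set" where
  "edges_at E v = {e \<in> E. v \<in> e}"

definition valence :: "'v set set \<Rightarrow> 'v \<Rightarrow> nat" where
  "valence E v = card (edges_at E v)"

definition leaves :: "'v set \<Rightarrow> 'v set set \<Rightarrow> 'v set" where
  "leaves V E = {v \<in> V. valence E v = 1}"

definition internal :: "'v set \<Rightarrow> 'v set set \<Rightarrow> 'v set" where
  "internal V E = V - leaves V E"

definition stable_tree :: "'v set \<Rightarrow> 'v set set \<Rightarrow> bool" where
  "stable_tree V E \<longleftrightarrow> (\<forall>v\<in>internal V E. valence E v \<ge> 3)"

text \<open>B_v(e): the connected component of the tree minus v containing the edge e
  (its vertex set, i.e. the vertices reachable from the other endpoint of e avoiding v).\<close>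
definition branch :: "'v set set \<Rightarrow> 'v \<Rightarrow> 'v set \<Rightarrow> 'v set" where
  "branch E v e = {w. \<exists>u\<in>e. u \<noteq> v \<and>
       (u, w) \<in> (edge_rel {f \<in> E. v \<notin> f})\<^sup>*}"

definition toward :: "'v set set \<Rightarrow> 'v \<Rightarrow> 'v \<Rightarrow> 'v set" where
  "toward E v w = (THE e. e \<in> edges_at E v \<and> w \<in> branch E v e)"

text \<open>Each sphere S_v is identified with the Riemann sphere via a chart of its projective
  structure; i v is the injection of the edges at v into S_v.\<close>
definition proj_tree_of_spheres ::
    "'v set \<Rightarrow> 'v set set \<Rightarrow> 'v set \<Rightarrow> ('v \<Rightarrow> 'v set \<Rightarrow> ecomplex) \<Rightarrow> bool" where
  "proj_tree_of_spheres V E X i \<longleftrightarrow> is_tree V E \<and> leaves V E = X \<and> card X \<ge> 3 \<and>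
     (\<forall>v\<in>internal V E. inj_on (i v) (edges_at E v))"

definition iv :: "'v set set \<Rightarrow> ('v \<Rightarrow> 'v set \<Rightarrow> ecomplex) \<Rightarrow> 'v \<Rightarrow> 'v \<Rightarrow> ecomplex" where
  "iv E i v w = i v (toward E v w)"

definition marked_sphere :: "'v set \<Rightarrow> ('v \<Rightarrow> ecomplex) \<Rightarrow> bool" where
  "marked_sphere X x \<longleftrightarrow> inj_on x X"

definition converges_via ::
    "'v set \<Rightarrow> 'v set set \<Rightarrow> 'v set \<Rightarrow> ('v \<Rightarrow> 'v set \<Rightarrow> ecomplex) \<Rightarrow>
     (nat \<Rightarrow> 'v \<Rightarrow> ecomplex) \<Rightarrow> (nat \<Rightarrow> 'v \<Rightarrow> ecomplex \<Rightarrow> ecomplex) \<Rightarrow> bool" where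
  "converges_via V E X i xs \<phi> \<longleftrightarrow>
     (\<forall>v\<in>internal V E. (\<forall>n. is_moebius (\<phi> n v)) \<and>
        (\<forall>x\<in>X. conv_sphere (\<lambda>n. \<phi> n v (xs n x)) (iv E i v x)))"

end

theory Submission
  imports Defs "HOL-Analysis.Analysis" "HOL-Library.Transitive_Closure_Table"
begin

text \<open>The maps \<open>\<psi>\<^sub>n = \<phi>\<^sub>n\<^sub>,\<^sub>v\<^sub>' \<circ> \<phi>\<^sub>n\<^sub>,\<^sub>v\<^sup>-\<^sup>1\<close> are Moebius transformations. By stability there
  are leaves \<open>x\<close>, \<open>y\<close> in two different branches at \<open>v\<close>, neither containing \<open>v'\<close>, and a
  leaf \<open>z\<close> in a branch at \<open>v'\<close> not containing \<open>v\<close>; then \<open>x\<close> and \<open>y\<close> lie in the branch at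
  \<open>v'\<close> containing \<open>v\<close>, and \<open>z\<close> in the branch at \<open>v\<close> containing \<open>v'\<close>. So \<open>\<psi>\<^sub>n\<close> maps
  points converging to the distinct points \<open>i\<^sub>v(x)\<close>, \<open>i\<^sub>v(y)\<close> to points converging to the
  single point \<open>i\<^sub>v\<^sub>'(v)\<close>, and points converging to \<open>i\<^sub>v(z) = i\<^sub>v(v')\<close> to points
  converging to \<open>i\<^sub>v\<^sub>'(z) \<noteq> i\<^sub>v\<^sub>'(v)\<close>. Moebius maps preserve chordal cross ratios, and since
  chordal distances are bounded, the cross ratio of \<open>\<psi>\<^sub>n(w)\<close> with these three image points
  forces \<open>\<psi>\<^sub>n(w)\<close> towards \<open>i\<^sub>v\<^sub>'(v)\<close>, uniformly for \<open>w\<close> away from \<open>i\<^sub>v(v')\<close>.\<close>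

section \<open>The chordal metric\<close>

text \<open>Inverse stereographic projection onto the unit sphere of \<open>\<real>\<^sup>3\<close>.\<close>
definition stereo :: "ecomplex \<Rightarrow> real \<times> real \<times> real" where
  "stereo p = (case p of None \<Rightarrow> (0, 0, 1)
     | Some z \<Rightarrow> (2 * Re z / (1 + (cmod z)\<^sup>2), 2 * Im z / (1 + (cmod z)\<^sup>2),
                 ((cmod z)\<^sup>2 - 1) / (1 + (cmod z)\<^sup>2)))"

lemma norm_triple: "norm (a :: real, b :: real, c :: real) = sqrt (a\<^sup>2 + b\<^sup>2 + c\<^sup>2)"
  by (simp add: norm_Pair add.assoc)

lemma cdist_Some_Some_sq:
  "(cdist (Some z) (Some w))\<^sup>2 = (dist (stereo (Some z)) (stereo (Some w)))\<^sup>2"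
proof -
  obtain x y where z: "z = Complex x y" by (cases z)
  obtain u t where w: "w = Complex u t" by (cases w)
  define a where "a = 1 + x\<^sup>2 + y\<^sup>2"
  define b where "b = 1 + u\<^sup>2 + t\<^sup>2"
  have pos: "a > 0" "b > 0" unfolding a_def b_def by (simp_all add: add_pos_nonneg)
  have "(cdist (Some z) (Some w))\<^sup>2 = 4 * ((x - u)\<^sup>2 + (y - t)\<^sup>2) * a * b / (a * b)\<^sup>2"
    using pos by (simp add: z w cmod_def power_divide power2_eq_square a_def b_def add.assoc)
  also have "4 * ((x - u)\<^sup>2 + (y - t)\<^sup>2) * a * b = (2*x*b - 2*u*a)\<^sup>2 + (2*y*b - 2*t*a)\<^sup>2
      + ((x\<^sup>2 + y\<^sup>2 - 1)*b - (u\<^sup>2 + t\<^sup>2 - 1)*a)\<^sup>2"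
    unfolding a_def b_def by algebra
  also have "\<dots> / (a * b)\<^sup>2 = (2*x/a - 2*u/b)\<^sup>2 + (2*y/a - 2*t/b)\<^sup>2
      + ((x\<^sup>2 + y\<^sup>2 - 1)/a - (u\<^sup>2 + t\<^sup>2 - 1)/b)\<^sup>2"
    using pos by (simp add: field_simps)
  also have "\<dots> = (dist (stereo (Some z)) (stereo (Some w)))\<^sup>2"
    by (simp add: dist_norm norm_triple stereo_def z w cmod_def a_def b_def add.assoc)
  finally show ?thesis .
qed

lemma cdist_Some_None_sq: "(cdist (Some z) None)\<^sup>2 = (dist (stereo (Some z)) (stereo None))\<^sup>2"
proof -
  obtain x y where z: "z = Complex x y" by (cases z)
  define a where "a = 1 + x\<^sup>2 + y\<^sup>2"
  have pos: "a > 0" unfolding a_def by (simp add: add_pos_nonneg)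
  have "(cdist (Some z) None)\<^sup>2 = 4 / a"
    using pos by (simp add: z cmod_def power_divide a_def add.assoc)
  also have "\<dots> = 4 * a / a\<^sup>2"
    using pos by (simp add: power2_eq_square)
  also have "4 * a = (2*x)\<^sup>2 + (2*y)\<^sup>2 + (x\<^sup>2 + y\<^sup>2 - 1 - a)\<^sup>2"
    unfolding a_def by algebra
  also have "\<dots> / a\<^sup>2 = (2*x/a)\<^sup>2 + (2*y/a)\<^sup>2 + ((x\<^sup>2 + y\<^sup>2 - 1)/a - 1)\<^sup>2"
    using pos by (simp add: field_simps)
  also have "\<dots> = (dist (stereo (Some z)) (stereo None))\<^sup>2"
    by (simp add: dist_norm norm_triple stereo_def z cmod_def a_def add.assoc)
  finally show ?thesis .
qed

lemma cdist_self [simp]: "cdist p p = 0"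
  by (cases p) auto

lemma cdist_nonneg: "cdist p q \<ge> 0"
  by (cases p; cases q) auto

lemma cdist_eq_dist_stereo: "cdist p q = dist (stereo p) (stereo q)"
proof -
  have "(cdist p q)\<^sup>2 = (dist (stereo p) (stereo q))\<^sup>2"
  proof (cases p; cases q)
    fix z w assume "p = Some z" "q = Some w"
    then show ?thesis using cdist_Some_Some_sq[of z w] by (simp only:)
  next
    fix z assume "p = Some z" "q = None"
    then show ?thesis using cdist_Some_None_sq[of z] by (simp only:)
  next
    fix w assume "p = None" "q = Some w"
    moreover have "cdist None (Some w) = cdist (Some w) None" by simp
    ultimately show ?thesis using cdist_Some_None_sq[of w] by (simp only: dist_commute)
  qed (simp add: stereo_def)
  then show ?thesis
    using cdist_nonneg[of p q] by (simp add: power2_eq_iff_nonneg)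
qed

lemma cdist_commute: "cdist p q = cdist q p"
  by (simp add: cdist_eq_dist_stereo dist_commute)

lemma cdist_triangle: "cdist p r \<le> cdist p q + cdist q r"
  unfolding cdist_eq_dist_stereo by (rule dist_triangle)

lemma cdist_eq_0_iff: "cdist p q = 0 \<longleftrightarrow> p = q"
proof -
  have "1 + (cmod z)\<^sup>2 \<noteq> 0" for z :: complex
    by (metis add_pos_nonneg less_irrefl zero_le_power2 zero_less_one)
  then show ?thesis
    by (cases p; cases q) auto
qed

lemma cdist_pos_iff: "cdist p q > 0 \<longleftrightarrow> p \<noteq> q"
  using cdist_nonneg[of p q] cdist_eq_0_iff[of p q] by linarith

lemma norm_stereo: "norm (stereo p) = 1"
proof (cases p)
  case (Some z)
  obtain x y where z: "z = Complex x y" by (cases z)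
  define a where "a = 1 + x\<^sup>2 + y\<^sup>2"
  have pos: "a > 0" unfolding a_def by (simp add: add_pos_nonneg)
  have "(2*x)\<^sup>2 + (2*y)\<^sup>2 + (x\<^sup>2 + y\<^sup>2 - 1)\<^sup>2 = a\<^sup>2"
    unfolding a_def by algebra
  then have "(2*x/a)\<^sup>2 + (2*y/a)\<^sup>2 + ((x\<^sup>2 + y\<^sup>2 - 1)/a)\<^sup>2 = 1"
    using pos by (simp add: field_simps)
  then show ?thesis
    by (simp add: Some z norm_triple stereo_def cmod_def a_def add.assoc)
qed (simp add: stereo_def)

lemma cdist_le_2: "cdist p q \<le> 2"
  using norm_triangle_ineq4[of "stereo p" "stereo q"]
  by (simp add: cdist_eq_dist_stereo dist_norm norm_stereo)

lemma conv_sphere_iff_tendsto: "conv_sphere s l \<longleftrightarrow> ((\<lambda>n. cdist (s n) l) \<longlonglongrightarrow> 0)"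
  unfolding conv_sphere_def lim_sequentially by (simp add: cdist_nonneg)

section \<open>Moebius maps in homogeneous coordinates\<close>

text \<open>\<open>hvec\<close> chooses a representative \<open>(a, b)\<close> of a point of the sphere, \<open>hpoint\<close> maps it
  back to \<open>a / b\<close>; \<open>moeb a b c d\<close> is induced by the linear map \<open>hmat a b c d\<close>.\<close>
fun hvec :: "ecomplex \<Rightarrow> complex \<times> complex" where
  "hvec (Some z) = (z, 1)"
| "hvec None = (1, 0)"

fun hpoint :: "complex \<times> complex \<Rightarrow> ecomplex" where
  "hpoint (a, b) = (if b = 0 then None else Some (a / b))"

fun hdet :: "complex \<times> complex \<Rightarrow> complex \<times> complex \<Rightarrow> complex" where
  "hdet (a, b) (c, d) = a * d - b * c"

fun hnorm :: "complex \<times> complex \<Rightarrow> real" where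
  "hnorm (a, b) = sqrt ((cmod b)\<^sup>2 + (cmod a)\<^sup>2)"

fun hscale :: "complex \<Rightarrow> complex \<times> complex \<Rightarrow> complex \<times> complex" where
  "hscale k (a, b) = (k * a, k * b)"

fun hmat :: "complex \<Rightarrow> complex \<Rightarrow> complex \<Rightarrow> complex \<Rightarrow> complex \<times> complex \<Rightarrow> complex \<times> complex" where
  "hmat a b c d (x, y) = (a * x + b * y, c * x + d * y)"

lemma hvec_nonzero: "hvec p \<noteq> (0, 0)"
  by (cases p) auto

lemma hnorm_pos: "u \<noteq> (0, 0) \<Longrightarrow> hnorm u > 0"
  by (cases u) (auto simp: add_pos_nonneg add_nonneg_pos)

lemma hdet_hscale: "hdet (hscale k u) (hscale l w) = k * l * hdet u w"
  by (cases u; cases w) (simp add: algebra_simps)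

lemma hnorm_hscale: "hnorm (hscale k u) = cmod k * hnorm u"
  by (cases u) (simp add: norm_mult power_mult_distrib distrib_left[symmetric] real_sqrt_mult)

lemma hpoint_hscale: "k \<noteq> 0 \<Longrightarrow> hpoint (hscale k u) = hpoint u"
  by (cases u) auto

lemma hscale_hvec_hpoint: "u \<noteq> (0, 0) \<Longrightarrow> \<exists>k. k \<noteq> 0 \<and> u = hscale k (hvec (hpoint u))"
proof (cases u)
  case (Pair a b)
  assume "u \<noteq> (0, 0)"
  then show ?thesis
    using Pair by (cases "b = 0") (auto intro: exI[of _ a] exI[of _ b])
qed

lemma cdist_hvec: "cdist p q = 2 * cmod (hdet (hvec p) (hvec q)) / (hnorm (hvec p) * hnorm (hvec q))"
  by (cases p; cases q) (auto simp: real_sqrt_mult)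

lemma cdist_hpoint:
  assumes "u \<noteq> (0, 0)" and "w \<noteq> (0, 0)"
  shows "cdist (hpoint u) (hpoint w) = 2 * cmod (hdet u w) / (hnorm u * hnorm w)"
proof -
  obtain k where k: "k \<noteq> 0" "u = hscale k (hvec (hpoint u))"
    using hscale_hvec_hpoint[OF assms(1)] by blast
  obtain l where l: "l \<noteq> 0" "w = hscale l (hvec (hpoint w))"
    using hscale_hvec_hpoint[OF assms(2)] by blast
  have "2 * cmod (hdet u w) / (hnorm u * hnorm w)
      = 2 * cmod (hdet (hscale k (hvec (hpoint u))) (hscale l (hvec (hpoint w))))
        / (hnorm (hscale k (hvec (hpoint u))) * hnorm (hscale l (hvec (hpoint w))))"
    using k l by simp
  also have "\<dots> = cdist (hpoint u) (hpoint w)"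
    using k(1) l(1) by (simp add: hdet_hscale hnorm_hscale norm_mult cdist_hvec)
  finally show ?thesis ..
qed

lemma hdet_hmat: "hdet (hmat a b c d u) (hmat a b c d w) = (a * d - b * c) * hdet u w"
  by (cases u; cases w) (simp add: algebra_simps)

lemma hmat_nonzero:
  assumes "a * d - b * c \<noteq> 0" and "u \<noteq> (0, 0)"
  shows "hmat a b c d u \<noteq> (0, 0)"
proof
  assume "hmat a b c d u = (0, 0)"
  then have "hdet (hmat a b c d u) (hmat a b c d w) = 0" for w
    by (cases w) simp
  then have "hdet u w = 0" for w
    using assms(1) by (simp add: hdet_hmat)
  from this[of "(0, 1)"] this[of "(1, 0)"] assms(2) show False
    by (cases u) simp
qed

lemma hmat_hscale: "hmat a b c d (hscale k u) = hscale k (hmat a b c d u)"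
  by (cases u) (simp add: algebra_simps)

lemma hmat_hmat: "hmat a b c d (hmat a' b' c' d' u) =
    hmat (a*a' + b*c') (a*b' + b*d') (c*a' + d*c') (c*b' + d*d') u"
  by (cases u) (simp add: algebra_simps)

lemma moeb_eq_hpoint_hmat: "moeb a b c d p = hpoint (hmat a b c d (hvec p))"
  by (cases p) (auto simp: moeb_def)

lemma moeb_moeb:
  assumes "a' * d' - b' * c' \<noteq> 0"
  shows "moeb a b c d (moeb a' b' c' d' p) =
    moeb (a*a' + b*c') (a*b' + b*d') (c*a' + d*c') (c*b' + d*d') p"
proof -
  define u where "u = hmat a' b' c' d' (hvec p)"
  obtain k where k: "k \<noteq> 0" "u = hscale k (hvec (hpoint u))"
    using hscale_hvec_hpoint hmat_nonzero[OF assms hvec_nonzero] unfolding u_def by blast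
  have "moeb a b c d (hpoint u) = hpoint (hmat a b c d u)"
    using arg_cong[OF k(2), of "\<lambda>v. hpoint (hmat a b c d v)"]
    by (simp add: moeb_eq_hpoint_hmat hmat_hscale hpoint_hscale[OF k(1)])
  then show ?thesis
    by (simp add: u_def moeb_eq_hpoint_hmat hmat_hmat)
qed

lemma moeb_scalar: "k \<noteq> 0 \<Longrightarrow> moeb k 0 0 k p = p"
  by (cases p) (auto simp: moeb_def)

lemma is_moebius_comp:
  assumes "is_moebius f" and "is_moebius g"
  shows "is_moebius (f \<circ> g)"
proof -
  obtain a b c d where f: "a * d - b * c \<noteq> 0" "f = moeb a b c d"
    using assms(1) unfolding is_moebius_def by blast
  obtain a' b' c' d' where g: "a' * d' - b' * c' \<noteq> 0" "g = moeb a' b' c' d'"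
    using assms(2) unfolding is_moebius_def by blast
  have "(a*a' + b*c') * (c*b' + d*d') - (a*b' + b*d') * (c*a' + d*c') = (a*d - b*c) * (a'*d' - b'*c')"
    by (simp add: algebra_simps)
  moreover have "f \<circ> g = moeb (a*a' + b*c') (a*b' + b*d') (c*a' + d*c') (c*b' + d*d')"
    using f g by (auto simp: moeb_moeb)
  ultimately show ?thesis
    using f(1) g(1) unfolding is_moebius_def by (metis mult_eq_0_iff)
qed

lemma is_moebius_inv:
  assumes "is_moebius f"
  shows "is_moebius (inv f)" and "inv f (f p) = p"
proof -
  obtain a b c d where f: "a * d - b * c \<noteq> 0" "f = moeb a b c d"
    using assms unfolding is_moebius_def by blast
  define g where "g = moeb d (-b) (-c) a"
  have g: "d * a - (-b) * (-c) \<noteq> 0"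
    using f(1) by (simp add: algebra_simps)
  have gf: "g \<circ> f = id"
    unfolding g_def f(2) using moeb_scalar[of "a * d - b * c"] f(1)
    by (auto simp: moeb_moeb[OF f(1)] algebra_simps)
  moreover have fg: "f \<circ> g = id"
    unfolding g_def f(2) using moeb_scalar[of "a * d - b * c"] f(1)
    by (auto simp: moeb_moeb[OF g] algebra_simps)
  ultimately have "inv f = g"
    by (rule inv_unique_comp[rotated])
  then show "is_moebius (inv f)"
    using g unfolding g_def is_moebius_def by blast
  show "inv f (f p) = p"
    using gf \<open>inv f = g\<close> by (metis comp_apply id_apply)
qed

lemma is_moebius_cdist_factor:
  assumes "is_moebius f"
  obtains s where "\<And>p q. cdist (f p) (f q) = s p * s q * cdist p q"
proof -
  obtain a b c d where D: "a * d - b * c \<noteq> 0" and f: "f = moeb a b c d"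
    using assms unfolding is_moebius_def by blast
  define s where "s p = sqrt (cmod (a * d - b * c)) * hnorm (hvec p) / hnorm (hmat a b c d (hvec p))"
    for p
  have nz: "hnorm (hvec p) \<noteq> 0" "hnorm (hmat a b c d (hvec p)) \<noteq> 0" for p
    using hnorm_pos hvec_nonzero hmat_nonzero[OF D] by (metis less_irrefl)+
  have sq: "sqrt (cmod (a * d - b * c)) * sqrt (cmod (a * d - b * c)) = cmod (a * d - b * c)"
    by simp
  have "cdist (f p) (f q) = 2 * (cmod (a * d - b * c) * cmod (hdet (hvec p) (hvec q)))
      / (hnorm (hmat a b c d (hvec p)) * hnorm (hmat a b c d (hvec q)))" for p q
    unfolding f moeb_eq_hpoint_hmat
    by (simp add: cdist_hpoint hmat_nonzero[OF D] hvec_nonzero hdet_hmat norm_mult)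
  also have "\<dots> p q = s p * s q * cdist p q" for p q
    unfolding s_def cdist_hvec[of p q] using nz[of p] nz[of q] sq
    by (simp add: field_simps)
  finally show ?thesis by (rule that)
qed

text \<open>The chordal cross ratio of \<open>w, p, q, r\<close> is invariant under \<open>f\<close>, and the
  distances not controlled by the hypotheses are at most 2.\<close>
lemma is_moebius_cdist_le:
  assumes f: "is_moebius f"
    and pos: "\<rho> > 0" "\<mu> > 0" "\<kappa> > 0"
    and sep: "cdist w r \<ge> \<rho>" "cdist q p \<ge> \<mu>" "cdist (f q) (f r) \<ge> \<kappa>"
  shows "cdist (f w) (f p) \<le> 8 * cdist (f q) (f p) / (\<kappa> * \<rho> * \<mu>)"
proof -
  obtain s where s: "\<And>p q. cdist (f p) (f q) = s p * s q * cdist p q"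
    using is_moebius_cdist_factor[OF f] by blast
  have "cdist (f w) (f p) * (\<kappa> * \<rho> * \<mu>)
      \<le> cdist (f w) (f p) * (cdist (f q) (f r) * cdist w r * cdist q p)"
    using sep pos by (intro mult_left_mono mult_mono) (auto simp: cdist_nonneg)
  also have "\<dots> = cdist w p * cdist q r * cdist (f w) (f r) * cdist (f q) (f p)"
    unfolding s by (simp add: ac_simps)
  also have "\<dots> \<le> 2 * 2 * 2 * cdist (f q) (f p)"
    by (intro mult_mono) (auto simp: cdist_le_2 cdist_nonneg)
  finally show ?thesis
    using pos by (simp add: field_simps)
qed

lemma is_moebius_cdist_le_sum:
  assumes "is_moebius f" and "\<rho> > 0" "\<mu> > 0" "\<kappa> > 0"
    and "cdist w r \<ge> \<rho>" "cdist q p \<ge> \<mu>" "cdist (f q) (f r) \<ge> \<kappa>"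
  shows "cdist (f w) c \<le> 8 / (\<kappa> * \<rho> * \<mu>) * (cdist (f q) c + cdist (f p) c) + cdist (f p) c"
proof -
  have "cdist (f w) (f p) \<le> 8 / (\<kappa> * \<rho> * \<mu>) * cdist (f q) (f p)"
    using is_moebius_cdist_le[OF assms] by simp
  also have "\<dots> \<le> 8 / (\<kappa> * \<rho> * \<mu>) * (cdist (f q) c + cdist (f p) c)"
    using assms(2-4) cdist_triangle[of "f q" "f p" c] cdist_commute[of c "f p"]
    by (intro mult_left_mono) auto
  finally show ?thesis
    using cdist_triangle[of "f w" c "f p"] by simp
qed

lemma eventually_cdist_ge_half:
  assumes "conv_sphere s a" and "conv_sphere t b"
  shows "eventually (\<lambda>n. cdist (s n) (t n) \<ge> cdist a b / 2) sequentially"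
proof (cases "a = b")
  case True
  then show ?thesis by (simp add: cdist_nonneg)
next
  case False
  then have d: "cdist a b / 4 > 0" by (simp add: cdist_pos_iff)
  have "eventually (\<lambda>n. cdist (s n) a < cdist a b / 4 \<and> cdist (t n) b < cdist a b / 4) sequentially"
    using assms d unfolding conv_sphere_iff_tendsto by (intro eventually_conj order_tendstoD)
  then show ?thesis
  proof eventually_elim
    case (elim n)
    have "cdist a b \<le> cdist a (s n) + cdist (s n) (t n) + cdist (t n) b"
      by (metis add_right_mono cdist_triangle order_trans)
    with elim show ?case by (simp add: cdist_commute)
  qed
qed

lemma moebius_seq_loc_unif_conv_const:
  fixes \<psi> :: "nat \<Rightarrow> ecomplex \<Rightarrow> ecomplex"
  assumes mo: "\<And>n. is_moebius (\<psi> n)"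
    and p: "conv_sphere pn p" and q: "conv_sphere qn q" and r: "conv_sphere rn r" and "p \<noteq> q"
    and \<psi>p: "conv_sphere (\<lambda>n. \<psi> n (pn n)) c" and \<psi>q: "conv_sphere (\<lambda>n. \<psi> n (qn n)) c"
    and \<psi>r: "conv_sphere (\<lambda>n. \<psi> n (rn n)) R" and "R \<noteq> c"
  shows "loc_unif_conv_const \<psi> (UNIV - {r}) c"
  unfolding loc_unif_conv_const_def
proof (intro ballI)
  fix z assume "z \<in> UNIV - {r}"
  define \<rho> where "\<rho> = cdist z r / 2"
  define \<mu> where "\<mu> = cdist q p"
  define \<kappa> where "\<kappa> = cdist c R"
  have pos: "\<rho> > 0" "\<mu> > 0" "\<kappa> > 0"
    using \<open>z \<in> UNIV - {r}\<close> \<open>p \<noteq> q\<close> \<open>R \<noteq> c\<close> by (auto simp: \<rho>_def \<mu>_def \<kappa>_def cdist_pos_iff)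
  define K where "K = 8 / (\<kappa>/2 * (\<rho>/2) * (\<mu>/2))"
  define bound where "bound n = K * (cdist (\<psi> n (qn n)) c + cdist (\<psi> n (pn n)) c) + cdist (\<psi> n (pn n)) c"
    for n
  have bound: "cdist (\<psi> n w) c \<le> bound n"
    if "cdist w z < \<rho>" and "cdist (rn n) r < \<rho> / 2"
      and "cdist (qn n) (pn n) \<ge> \<mu> / 2" "cdist (\<psi> n (qn n)) (\<psi> n (rn n)) \<ge> \<kappa> / 2" for n w
  proof -
    have "cdist z r \<le> cdist z w + cdist w (rn n) + cdist (rn n) r"
      by (metis add_right_mono cdist_triangle order_trans)
    then have "cdist w (rn n) \<ge> \<rho> / 2"
      using that by (simp add: \<rho>_def cdist_commute)
    with that pos show ?thesis
      unfolding bound_def K_def by (intro is_moebius_cdist_le_sum[OF mo]) auto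
  qed
  have "bound \<longlonglongrightarrow> K * (0 + 0) + 0"
    unfolding bound_def using \<psi>p \<psi>q unfolding conv_sphere_iff_tendsto by (intro tendsto_intros)
  show "\<exists>\<delta>>0. \<forall>e>0. \<exists>N. \<forall>n\<ge>N. \<forall>w\<in>UNIV - {r}. cdist w z < \<delta> \<longrightarrow> cdist (\<psi> n w) c < e"
  proof (intro exI[of _ \<rho>] conjI allI impI pos(1))
    fix e :: real assume "e > 0"
    have "eventually (\<lambda>n. bound n < e \<and> cdist (rn n) r < \<rho> / 2 \<and> cdist (qn n) (pn n) \<ge> \<mu> / 2
        \<and> cdist (\<psi> n (qn n)) (\<psi> n (rn n)) \<ge> \<kappa> / 2) sequentially"
      using \<open>bound \<longlonglongrightarrow> _\<close> \<open>e > 0\<close> r pos(1) unfolding \<mu>_def \<kappa>_def conv_sphere_iff_tendsto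
      by (intro eventually_conj order_tendstoD eventually_cdist_ge_half[OF q p]
          eventually_cdist_ge_half[OF \<psi>q \<psi>r]) auto
    then obtain N where N: "\<And>n. n \<ge> N \<Longrightarrow> bound n < e \<and> cdist (rn n) r < \<rho> / 2
        \<and> cdist (qn n) (pn n) \<ge> \<mu> / 2 \<and> cdist (\<psi> n (qn n)) (\<psi> n (rn n)) \<ge> \<kappa> / 2"
      unfolding eventually_sequentially by blast
    show "\<exists>N. \<forall>n\<ge>N. \<forall>w\<in>UNIV - {r}. cdist w z < \<rho> \<longrightarrow> cdist (\<psi> n w) c < e"
    proof (intro exI[of _ N] allI impI ballI)
      fix n w assume "n \<ge> N" and "cdist w z < \<rho>"
      with N[of n] bound[of w n] show "cdist (\<psi> n w) c < e" by linarith
    qed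
  qed
qed

section \<open>Branches of a tree\<close>

abbreviation edges_avoiding :: "'v set set \<Rightarrow> 'v \<Rightarrow> 'v set set" where
  "edges_avoiding E v \<equiv> {f \<in> E. v \<notin> f}"

lemma edge_rel_iff [simp]: "(a, b) \<in> edge_rel F \<longleftrightarrow> {a, b} \<in> F"
  unfolding edge_rel_def by simp

lemma sym_edge_rel: "sym (edge_rel F)"
  unfolding sym_def by (simp add: insert_commute)

lemma tree_edge: "is_tree V E \<Longrightarrow> e \<in> E \<Longrightarrow> \<exists>a b. a \<noteq> b \<and> a \<in> V \<and> b \<in> V \<and> e = {a, b}"
  unfolding is_tree_def by blast

lemma tree_edge_vertices: "is_tree V E \<Longrightarrow> e \<in> E \<Longrightarrow> x \<in> e \<Longrightarrow> x \<in> V"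
  using tree_edge by blast

lemma tree_edges_at:
  assumes "is_tree V E" and "e \<in> edges_at E v"
  shows "\<exists>u. u \<noteq> v \<and> u \<in> V \<and> e = {v, u}"
proof -
  obtain a b where "a \<noteq> b" "a \<in> V" "b \<in> V" "e = {a, b}"
    using tree_edge assms unfolding edges_at_def by blast
  with assms(2) show ?thesis
    unfolding edges_at_def by auto
qed

lemma tree_edges_at_eq: "is_tree V E \<Longrightarrow> e \<in> edges_at E v \<Longrightarrow> u \<in> e \<Longrightarrow> u \<noteq> v \<Longrightarrow> e = {v, u}"
  using tree_edges_at by fastforce

lemma not_in_branch: "w \<in> branch E v e \<Longrightarrow> w \<noteq> v"
  unfolding branch_def
proof (elim CollectE bexE conjE)
  fix u assume "u \<noteq> v" and "(u, w) \<in> (edge_rel (edges_avoiding E v))\<^sup>*"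
  from this(2) show "w \<noteq> v"
    by (cases rule: rtranclE) (use \<open>u \<noteq> v\<close> in auto)
qed

lemma branch_rtrancl:
  "a \<in> branch E v e \<Longrightarrow> (a, b) \<in> (edge_rel (edges_avoiding E v))\<^sup>* \<Longrightarrow> b \<in> branch E v e"
  unfolding branch_def by (auto intro: rtrancl_trans)

lemma endpoint_in_branch: "u \<in> e \<Longrightarrow> u \<noteq> v \<Longrightarrow> u \<in> branch E v e"
  unfolding branch_def by auto

lemma branch_exists:
  assumes T: "is_tree V E" and "v \<in> V" "w \<in> V" "w \<noteq> v"
  shows "\<exists>e\<in>edges_at E v. w \<in> branch E v e"
proof -
  have "(v, w) \<in> (edge_rel E)\<^sup>*"
    using assms unfolding is_tree_def by blast
  then have "w = v \<or> (\<exists>e\<in>edges_at E v. w \<in> branch E v e)"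
  proof (induction rule: rtrancl_induct)
    case (step y z)
    have yz: "{y, z} \<in> E"
      using step.hyps(2) by simp
    show ?case
    proof (cases "z = v")
      case False
      from step.IH show ?thesis
      proof
        assume "y = v"
        then have "{v, z} \<in> edges_at E v"
          using yz unfolding edges_at_def by simp
        moreover have "z \<in> branch E v {v, z}"
          using False by (intro endpoint_in_branch) auto
        ultimately show ?thesis by blast
      next
        assume "\<exists>e\<in>edges_at E v. y \<in> branch E v e"
        then obtain e where e: "e \<in> edges_at E v" "y \<in> branch E v e" by blast
        then have "(y, z) \<in> edge_rel (edges_avoiding E v)"
          using yz False not_in_branch[OF e(2)] by simp
        then have "z \<in> branch E v e"
          using branch_rtrancl[OF e(2)] by blast
        with e(1) show ?thesis by blast
      qed
    qed simp
  qed simp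
  with \<open>w \<noteq> v\<close> show ?thesis by blast
qed

definition is_walk :: "'v set set \<Rightarrow> 'v list \<Rightarrow> bool" where
  "is_walk E L \<longleftrightarrow> (\<forall>k. Suc k < length L \<longrightarrow> {L ! k, L ! Suc k} \<in> E)"

lemma has_cycle_if_closed_walk:
  assumes "distinct L" "length L \<ge> 3" "is_walk E L" "{last L, hd L} \<in> E"
  shows "has_cycle E"
  unfolding has_cycle_def
proof (intro exI[of _ L] conjI allI impI assms(1,2))
  fix k assume k: "k < length L"
  show "{L ! k, L ! ((k + 1) mod length L)} \<in> E"
  proof (cases "Suc k < length L")
    case True
    then show ?thesis using assms(3) unfolding is_walk_def by simp
  next
    case False
    then have "k = length L - 1" "Suc k = length L" using k by auto
    moreover have "L \<noteq> []" using assms(2) by auto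
    ultimately show ?thesis using assms(4) by (simp add: last_conv_nth hd_conv_nth)
  qed
qed

lemma is_walk_rtrancl_path:
  assumes "rtrancl_path (\<lambda>a b. (a, b) \<in> edge_rel F) x ys y"
  shows "is_walk F (x # ys)"
  unfolding is_walk_def
proof (intro allI impI)
  fix k assume "Suc k < length (x # ys)"
  then show "{(x # ys) ! k, (x # ys) ! Suc k} \<in> F"
    using rtrancl_path_nth[OF assms, of k] by simp
qed

lemma tree_neighbours_not_connected_avoiding:
  assumes T: "is_tree V E" and "{v, u1} \<in> E" "{v, u2} \<in> E" "u1 \<noteq> u2" "u1 \<noteq> v"
  shows "(u1, u2) \<notin> (edge_rel (edges_avoiding E v))\<^sup>*"
proof
  let ?R = "edge_rel (edges_avoiding E v)"
  assume "(u1, u2) \<in> ?R\<^sup>*"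
  moreover have "{(a, b). (a, b) \<in> ?R} = ?R" by auto
  ultimately have "(\<lambda>a b. (a, b) \<in> ?R)\<^sup>*\<^sup>* u1 u2"
    by (simp only: rtranclp_rtrancl_eq)
  then obtain ys0 where "rtrancl_path (\<lambda>a b. (a, b) \<in> ?R) u1 ys0 u2"
    unfolding rtranclp_eq_rtrancl_path by blast
  then obtain ys where p: "rtrancl_path (\<lambda>a b. (a, b) \<in> ?R) u1 ys u2" and d: "distinct (u1 # ys)"
    by (rule rtrancl_path_distinct)
  have "ys \<noteq> []"
    using p \<open>u1 \<noteq> u2\<close> by (cases rule: rtrancl_path.cases) auto
  have "v \<notin> set ys"
    using rtrancl_path_Range[OF p] by auto
  have "is_walk E (u1 # ys)"
    using is_walk_rtrancl_path[OF p] unfolding is_walk_def by auto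
  then have "is_walk E (v # u1 # ys)"
    using assms(2) unfolding is_walk_def by (auto simp: nth_Cons split: nat.split)
  moreover have "last (v # u1 # ys) = u2"
    using rtrancl_path_last[OF p \<open>ys \<noteq> []\<close>] \<open>ys \<noteq> []\<close> by simp
  ultimately have "has_cycle E"
    using d \<open>v \<notin> set ys\<close> \<open>u1 \<noteq> v\<close> \<open>ys \<noteq> []\<close> assms(3)
    by (intro has_cycle_if_closed_walk) (auto simp: insert_commute Suc_le_eq)
  then show False
    using T unfolding is_tree_def by blast
qed

lemma branch_unique:
  assumes T: "is_tree V E"
    and e1: "e1 \<in> edges_at E v" and e2: "e2 \<in> edges_at E v"
    and "w \<in> branch E v e1" and "w \<in> branch E v e2"
  shows "e1 = e2"
proof (rule ccontr)
  assume "e1 \<noteq> e2"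
  let ?R = "edge_rel (edges_avoiding E v)"
  obtain u1 where u1: "u1 \<in> e1" "u1 \<noteq> v" "(u1, w) \<in> ?R\<^sup>*"
    using \<open>w \<in> branch E v e1\<close> unfolding branch_def by blast
  obtain u2 where u2: "u2 \<in> e2" "u2 \<noteq> v" "(u2, w) \<in> ?R\<^sup>*"
    using \<open>w \<in> branch E v e2\<close> unfolding branch_def by blast
  have e12: "e1 = {v, u1}" "e2 = {v, u2}"
    using tree_edges_at_eq[OF T] e1 e2 u1 u2 by auto
  have "(w, u2) \<in> ?R\<^sup>*"
    using rtrancl_converseI[OF u2(3)] sym_edge_rel sym_conv_converse_eq by metis
  with u1(3) have "(u1, u2) \<in> ?R\<^sup>*"
    by (rule rtrancl_trans)
  moreover have "{v, u1} \<in> E" "{v, u2} \<in> E" "u1 \<noteq> u2"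
    using e1 e2 e12 \<open>e1 \<noteq> e2\<close> unfolding edges_at_def by auto
  ultimately show False
    using tree_neighbours_not_connected_avoiding[OF T] u1(2) by blast
qed

lemma toward_eq:
  assumes "is_tree V E" and "e \<in> edges_at E v" and "w \<in> branch E v e"
  shows "toward E v w = e"
  unfolding toward_def
  by (rule the_equality) (use assms(2,3) branch_unique[OF assms(1)] in blast)+

lemma toward_in_edges_at_and_branch:
  assumes "is_tree V E" and "v \<in> V" "w \<in> V" "w \<noteq> v"
  shows "toward E v w \<in> edges_at E v" and "w \<in> branch E v (toward E v w)"
proof -
  obtain e where "e \<in> edges_at E v" "w \<in> branch E v e"
    using branch_exists[OF assms] by blast
  then show "toward E v w \<in> edges_at E v" and "w \<in> branch E v (toward E v w)"
    using toward_eq[OF assms(1)] by simp_all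
qed

lemma is_walk_subset:
  assumes T: "is_tree V E" and "is_walk E L" and "length L \<ge> 2"
  shows "set L \<subseteq> V"
proof
  fix x assume "x \<in> set L"
  then obtain k where k: "k < length L" "x = L ! k"
    by (auto simp: in_set_conv_nth)
  show "x \<in> V"
  proof (cases "Suc k < length L")
    case True
    then have "{L ! k, L ! Suc k} \<in> E"
      using assms(2) unfolding is_walk_def by blast
    then show ?thesis
      using tree_edge_vertices[OF T] k by blast
  next
    case False
    then have "Suc (k - 1) < length L" "k = Suc (k - 1)"
      using k assms(3) by auto
    then have "{L ! (k - 1), L ! k} \<in> E"
      using assms(2) unfolding is_walk_def by metis
    then show ?thesis
      using tree_edge_vertices[OF T] k by blast
  qed
qed

lemma is_walk_rtrancl_avoiding:
  assumes "is_walk E L" and "distinct L" and "L ! 0 = v" and "1 \<le> k" and "k < length L"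
  shows "(L ! 1, L ! k) \<in> (edge_rel (edges_avoiding E v))\<^sup>*"
  using assms(4,5)
proof (induction k)
  case (Suc k)
  show ?case
  proof (cases "k = 0")
    case False
    have "L \<noteq> []"
      using Suc.prems by auto
    then have "L ! k \<noteq> v" "L ! Suc k \<noteq> v"
      using False Suc.prems assms(3) nth_eq_iff_index_eq[OF assms(2), of k 0]
        nth_eq_iff_index_eq[OF assms(2), of "Suc k" 0] by auto
    moreover have "{L ! k, L ! Suc k} \<in> E"
      using assms(1) Suc.prems unfolding is_walk_def by blast
    ultimately have "(L ! k, L ! Suc k) \<in> edge_rel (edges_avoiding E v)" by simp
    with Suc.IH Suc.prems False show ?thesis
      by (auto intro: rtrancl_into_rtrancl)
  qed simp
qed simp

text \<open>A path that cannot be prolonged ends in a leaf: a second neighbour of its endpoint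
  would either prolong it or close a cycle.\<close>
lemma last_of_maximal_path_in_leaves:
  assumes T: "is_tree V E" and dL: "distinct L" and wL: "is_walk E L" and lL: "length L \<ge> 2"
    and maximal: "\<And>s. {last L, s} \<in> E \<Longrightarrow> s \<in> set L"
  shows "last L \<in> leaves V E"
proof -
  define m where "m = length L"
  define t where "t = last L"
  have m: "m \<ge> 2" "Suc (m - 2) = m - 1" "Suc (m - 1) = m"
    using lL by (auto simp: m_def)
  have t: "t = L ! (m - 1)"
    using lL by (cases L rule: rev_cases) (auto simp: t_def m_def nth_append)
  have pred: "{L ! (m - 2), t} \<in> E"
    using wL m unfolding is_walk_def t m_def by (metis lessI)
  have nbr: "s = L ! (m - 2)" if s: "{t, s} \<in> E" "s \<noteq> t" for s
  proof (rule ccontr)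
    assume ne: "s \<noteq> L ! (m - 2)"
    obtain j where j: "j < m" "s = L ! j"
      using maximal s(1) by (auto simp: t_def m_def in_set_conv_nth)
    with ne s(2) t m have "j < m - 2"
      by (cases "j = m - 2"; cases "j = m - 1") auto
    define C where "C = drop j L"
    have "has_cycle E"
    proof (rule has_cycle_if_closed_walk)
      show "distinct C" "length C \<ge> 3"
        using dL \<open>j < m - 2\<close> by (auto simp: C_def m_def)
      show "is_walk E C"
        using wL unfolding is_walk_def C_def by (auto simp: add.commute)
      have "last C = t" "hd C = s"
        using j \<open>j < m - 2\<close> by (simp_all add: C_def t_def m_def hd_drop_conv_nth)
      then show "{last C, hd C} \<in> E"
        using s(1) by simp
    qed
    then show False
      using T unfolding is_tree_def by blast
  qed
  have "edges_at E t = {{L ! (m - 2), t}}"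
  proof (intro equalityI subsetI)
    fix f assume "f \<in> edges_at E t"
    then obtain s where "s \<noteq> t" "f = {t, s}"
      using tree_edges_at[OF T] by blast
    with \<open>f \<in> edges_at E t\<close> nbr show "f \<in> {{L ! (m - 2), t}}"
      unfolding edges_at_def by (auto simp: insert_commute)
  qed (use pred in \<open>simp add: edges_at_def\<close>)
  moreover have "t \<in> V"
    using is_walk_subset[OF T wL lL] lL by (cases L rule: rev_cases) (auto simp: t_def)
  ultimately show ?thesis
    by (simp add: leaves_def valence_def t_def)
qed

lemma is_walk_snoc:
  assumes "is_walk E L" and "L \<noteq> []" and "{last L, s} \<in> E"
  shows "is_walk E (L @ [s])"
  unfolding is_walk_def
proof (intro allI impI)
  fix k assume k: "Suc k < length (L @ [s])"
  show "{(L @ [s]) ! k, (L @ [s]) ! Suc k} \<in> E"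
  proof (cases "Suc k < length L")
    case True
    then show ?thesis using assms(1) unfolding is_walk_def by (simp add: nth_append)
  next
    case False
    with k have "k = length L - 1" "Suc k = length L" by auto
    with assms(2,3) show ?thesis by (simp add: nth_append last_conv_nth)
  qed
qed

lemma branch_contains_leaf:
  assumes T: "is_tree V E" and e: "e \<in> edges_at E v"
  shows "\<exists>t\<in>leaves V E. t \<in> branch E v e"
proof -
  obtain u where u: "u \<noteq> v" "e = {v, u}"
    using tree_edges_at[OF T e] by blast
  define P where "P L \<longleftrightarrow> distinct L \<and> length L \<ge> 2 \<and> L ! 0 = v \<and> L ! 1 = u \<and> is_walk E L" for L
  have "P [v, u]"
    using u e unfolding P_def is_walk_def edges_at_def by (auto simp: less_Suc_eq)
  moreover have "length L < Suc (card V)" if "P L" for L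
  proof -
    have "set L \<subseteq> V"
      using that is_walk_subset[OF T] unfolding P_def by blast
    then have "card (set L) \<le> card V"
      using T unfolding is_tree_def by (blast intro: card_mono)
    then show ?thesis
      using that distinct_card[of L] unfolding P_def by simp
  qed
  ultimately obtain L where L: "P L" and longest: "\<And>L'. P L' \<Longrightarrow> length L' \<le> length L"
    using Lattices_Big.ex_has_greatest_nat[of P "[v, u]" length "Suc (card V)"] by blast
  have Lne: "L \<noteq> []"
    using L unfolding P_def by auto
  have leaf: "last L \<in> leaves V E"
  proof (rule last_of_maximal_path_in_leaves[OF T])
    show "distinct L" "is_walk E L" "length L \<ge> 2"
      using L unfolding P_def by simp_all
    show "s \<in> set L" if "{last L, s} \<in> E" for s
    proof (rule ccontr)
      assume "s \<notin> set L"
      with L Lne that have "P (L @ [s])"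
        unfolding P_def by (auto simp: nth_append is_walk_snoc)
      then show False
        using longest by fastforce
    qed
  qed
  have "1 \<le> length L - 1" "length L - 1 < length L"
    using L unfolding P_def by auto
  then have "(L ! 1, L ! (length L - 1)) \<in> (edge_rel (edges_avoiding E v))\<^sup>*"
    using L unfolding P_def by (intro is_walk_rtrancl_avoiding) auto
  then have "(u, last L) \<in> (edge_rel (edges_avoiding E v))\<^sup>*"
    using L last_conv_nth[OF Lne] unfolding P_def by simp
  then have "last L \<in> branch E v e"
    using u unfolding branch_def by blast
  with leaf show ?thesis by blast
qed

lemma toward_eq_toward_if_separated:
  assumes T: "is_tree V E" and v: "v \<in> V" and v': "v' \<in> V" and "v \<noteq> v'"
    and x: "x \<in> V" "x \<noteq> v" and sep: "toward E v x \<noteq> toward E v v'"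
  shows "toward E v' x = toward E v' v"
proof -
  let ?e = "toward E v x"
  have e: "?e \<in> edges_at E v" "x \<in> branch E v ?e"
    using toward_in_edges_at_and_branch[OF T v x(1,2)] by auto
  have e': "toward E v v' \<in> edges_at E v" "v' \<in> branch E v (toward E v v')"
    using toward_in_edges_at_and_branch[OF T v v'] \<open>v \<noteq> v'\<close> by auto
  have avoid: "w \<noteq> v'" if "w \<in> branch E v ?e" for w
  proof
    assume "w = v'"
    with that e' have "?e = toward E v v'"
      using branch_unique[OF T e(1) e'(1)] by simp
    with sep show False ..
  qed
  obtain u where u: "u \<in> ?e" "u \<noteq> v" "(u, x) \<in> (edge_rel (edges_avoiding E v))\<^sup>*"
    using e(2) unfolding branch_def by blast
  have u_branch: "u \<in> branch E v ?e"
    using endpoint_in_branch[OF u(1,2)] .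
  have "(u, x) \<in> (edge_rel (edges_avoiding E v'))\<^sup>*"
    using u(3)
  proof (induction rule: rtrancl_induct)
    case (step y z)
    have y: "y \<in> branch E v ?e"
      using branch_rtrancl[OF u_branch step.hyps(1)] .
    have "z \<in> branch E v ?e"
      using branch_rtrancl[OF y r_into_rtrancl[OF step.hyps(2)]] .
    with y have "y \<noteq> v'" "z \<noteq> v'"
      using avoid by blast+
    then have "(y, z) \<in> edge_rel (edges_avoiding E v')"
      using step.hyps(2) by simp
    with step.IH show ?case by (rule rtrancl_into_rtrancl)
  qed simp
  moreover have "(v, u) \<in> edge_rel (edges_avoiding E v')"
  proof -
    have "{v, u} \<in> E"
      using e(1) tree_edges_at_eq[OF T e(1) u(1,2)] unfolding edges_at_def by simp
    then show ?thesis
      using \<open>v \<noteq> v'\<close> avoid[OF u_branch] by simp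
  qed
  ultimately have vx: "(v, x) \<in> (edge_rel (edges_avoiding E v'))\<^sup>*"
    by (rule converse_rtrancl_into_rtrancl[rotated])
  have f: "toward E v' v \<in> edges_at E v'" "v \<in> branch E v' (toward E v' v)"
    using toward_in_edges_at_and_branch[OF T v' v] \<open>v \<noteq> v'\<close> by auto
  have "x \<in> branch E v' (toward E v' v)"
    using branch_rtrancl[OF f(2) vx] .
  then show ?thesis
    using toward_eq[OF T f(1)] by simp
qed

lemma leaves_in_two_other_branches:
  assumes T: "is_tree V E" and "stable_tree V E" and v: "v \<in> internal V E"
    and e0: "e0 \<in> edges_at E v"
  obtains x y where "x \<in> leaves V E" "y \<in> leaves V E"
    "toward E v x \<in> edges_at E v" "toward E v y \<in> edges_at E v"
    "toward E v x \<noteq> toward E v y" "toward E v x \<noteq> e0" "toward E v y \<noteq> e0"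
proof -
  have "3 \<le> card (edges_at E v)"
    using assms(2) v unfolding stable_tree_def valence_def by blast
  then have "Suc 1 \<le> card (edges_at E v - {e0})"
    using e0 by (simp add: card_Diff_singleton_if)
  then obtain e1 B where B: "edges_at E v - {e0} = insert e1 B" "e1 \<notin> B" "1 \<le> card B"
    unfolding card_le_Suc_iff by blast
  then obtain e2 where "e2 \<in> B"
    by (metis card.empty ex_in_conv not_one_le_zero)
  with B have e12: "e1 \<in> edges_at E v" "e2 \<in> edges_at E v" "e1 \<noteq> e2" "e1 \<noteq> e0" "e2 \<noteq> e0"
    by (metis Diff_iff insertCI)+
  obtain x where x: "x \<in> leaves V E" "x \<in> branch E v e1"
    using branch_contains_leaf[OF T e12(1)] by blast
  obtain y where y: "y \<in> leaves V E" "y \<in> branch E v e2"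
    using branch_contains_leaf[OF T e12(2)] by blast
  show ?thesis
    using that x y e12 toward_eq[OF T e12(1) x(2)] toward_eq[OF T e12(2) y(2)] by simp
qed

lemma stable_tree_separating_leaves:
  assumes T: "is_tree V E" and st: "stable_tree V E"
    and v: "v \<in> internal V E" and v': "v' \<in> internal V E" and "v \<noteq> v'"
  obtains x y z where "x \<in> leaves V E" "y \<in> leaves V E" "z \<in> leaves V E"
    "toward E v x \<in> edges_at E v" "toward E v y \<in> edges_at E v" "toward E v x \<noteq> toward E v y"
    "toward E v' x = toward E v' v" "toward E v' y = toward E v' v" "toward E v z = toward E v v'"
    "toward E v' z \<in> edges_at E v'" "toward E v' v \<in> edges_at E v'" "toward E v' z \<noteq> toward E v' v"
proof -
  have V: "v \<in> V" "v' \<in> V" and leaf: "\<And>x. x \<in> leaves V E \<Longrightarrow> x \<in> V \<and> x \<noteq> v \<and> x \<noteq> v'"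
    using v v' unfolding internal_def leaves_def by auto
  have e: "toward E v v' \<in> edges_at E v" and e': "toward E v' v \<in> edges_at E v'"
    using toward_in_edges_at_and_branch[OF T] V \<open>v \<noteq> v'\<close> by auto
  obtain x y where x: "x \<in> leaves V E" "toward E v x \<in> edges_at E v" "toward E v x \<noteq> toward E v v'"
    and y: "y \<in> leaves V E" "toward E v y \<in> edges_at E v" "toward E v y \<noteq> toward E v v'"
    and "toward E v x \<noteq> toward E v y"
    using leaves_in_two_other_branches[OF T st v e] .
  obtain z where z: "z \<in> leaves V E" "toward E v' z \<in> edges_at E v'" "toward E v' z \<noteq> toward E v' v"
    using leaves_in_two_other_branches[OF T st v' e'] .
  have "toward E v' x = toward E v' v" "toward E v' y = toward E v' v"
    using toward_eq_toward_if_separated[OF T V \<open>v \<noteq> v'\<close>] leaf x(1,3) y(1,3) by simp_all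
  moreover have "toward E v z = toward E v v'"
    using toward_eq_toward_if_separated[OF T V(2,1) not_sym[OF \<open>v \<noteq> v'\<close>]] leaf z(1,3) by simp
  ultimately show ?thesis
    using that x y z e' \<open>toward E v x \<noteq> toward E v y\<close> by blast
qed

theorem lemma4p9:
  fixes V :: "'v set" and E :: "'v set set" and X :: "'v set"
    and i :: "'v \<Rightarrow> 'v set \<Rightarrow> ecomplex"
    and xs :: "nat \<Rightarrow> 'v \<Rightarrow> ecomplex"
    and \<phi> :: "nat \<Rightarrow> 'v \<Rightarrow> ecomplex \<Rightarrow> ecomplex"
    and v v' :: 'v
  assumes "proj_tree_of_spheres V E X i"
    and "stable_tree V E"
    and "v \<in> internal V E" and "v' \<in> internal V E" and "v \<noteq> v'"
    and "\<forall>n. marked_sphere X (xs n)"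
    and "converges_via V E X i xs \<phi>"
  shows "loc_unif_conv_const (\<lambda>n. \<phi> n v' \<circ> inv (\<phi> n v))
           (UNIV - {iv E i v v'}) (iv E i v' v)"
proof -
  have T: "is_tree V E" and X: "X = leaves V E"
    and inj: "\<And>w. w \<in> internal V E \<Longrightarrow> inj_on (i w) (edges_at E w)"
    and mo: "\<And>w n. w \<in> internal V E \<Longrightarrow> is_moebius (\<phi> n w)"
    and conv: "\<And>w x. w \<in> internal V E \<Longrightarrow> x \<in> X \<Longrightarrow> conv_sphere (\<lambda>n. \<phi> n w (xs n x)) (iv E i w x)"
    using assms(1,7) unfolding proj_tree_of_spheres_def converges_via_def by auto
  obtain x y z where leaves: "x \<in> X" "y \<in> X" "z \<in> X"
    and at_v: "toward E v x \<in> edges_at E v" "toward E v y \<in> edges_at E v" "toward E v x \<noteq> toward E v y"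
    and at_v': "toward E v' x = toward E v' v" "toward E v' y = toward E v' v" "toward E v z = toward E v v'"
      "toward E v' z \<in> edges_at E v'" "toward E v' v \<in> edges_at E v'" "toward E v' z \<noteq> toward E v' v"
    using stable_tree_separating_leaves[OF T assms(2-5)] unfolding X by metis
  define \<psi> where "\<psi> = (\<lambda>n. \<phi> n v' \<circ> inv (\<phi> n v))"
  have "is_moebius (\<psi> n)" and \<psi>: "\<psi> n (\<phi> n v p) = \<phi> n v' p" for n p
    using is_moebius_comp is_moebius_inv mo assms(3,4) by (simp_all add: \<psi>_def)
  have "iv E i v x \<noteq> iv E i v y"
    using inj_onD[OF inj[OF assms(3)] _ at_v(1,2)] at_v(3) unfolding iv_def by blast
  moreover have "iv E i v' z \<noteq> iv E i v' x"
    using inj_onD[OF inj[OF assms(4)] _ at_v'(4,5)] at_v'(1,6) unfolding iv_def by auto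
  moreover have "conv_sphere (\<lambda>n. \<psi> n (\<phi> n v (xs n y))) (iv E i v' x)"
    using conv[OF assms(4) leaves(2)] at_v'(1,2) by (simp add: \<psi> iv_def)
  ultimately have "loc_unif_conv_const \<psi> (UNIV - {iv E i v z}) (iv E i v' x)"
    using conv[OF assms(3)] conv[OF assms(4)] leaves \<open>is_moebius (\<psi> _)\<close>
    by (intro moebius_seq_loc_unif_conv_const[where pn = "\<lambda>n. \<phi> n v (xs n x)"
          and qn = "\<lambda>n. \<phi> n v (xs n y)" and rn = "\<lambda>n. \<phi> n v (xs n z)" and R = "iv E i v' z"])
       (simp_all add: \<psi>)
  then show ?thesis
    using at_v'(1,3) by (simp add: \<psi>_def iv_def)
qed

end
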